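(* Consider the M/M/K queue with heterogeneous servers described in the context, represented with the token state descriptor. If $\lambda<\mu:=\sum_{l=1}^K\mu(t_l)$, its stationary distribution is: for $i<K$ and distinct $T_1,\dots,T_i$, $\pi((T_1,0,\dots,T_i,0))=\pi((0))\frac{\lambda^i(K-i)!}{K!\prod_{j=1}^i\sum_{l=1}^j\mu(T_l)}$; for $i=K$, $\pi((T_1,0,\dots,T_{K-1},0,T_K,n))=\pi((0))\frac{\lambda^K}{K!\prod_{j=1}^K\sum_{l=1}^j\mu(T_l)}\big(\frac{\lambda}{\mu}\big)^{n}$, $n\ge0$; all other configurations have probability $0$; $\pi((0))$ is the normalising constant.
   Context: Single customer class arriving as a Poisson process with rate $\lambda$; $K$ servers $t_1,\dots,t_K$, server $t_l$ serving at exponential rate $\mu(t_l)>0$. An arriving customer finding idle servers joins one of them uniformly at random; otherwise it waits in a FCFS queue, and a server becoming free takes the longest-waiting customer. Servers are identified with tokens; the state is $(0)$ or $(T_1,n_1,\dots,T_i,n_i)$, where $T_1,\dots,T_i$ are the busy servers ordered by arrival time of the customers they serve and $n_j$ is the number of waiting customers that arrived between the customers served by $T_j$ and $T_{j+1}$ (after the customer at $T_i$ for $j=i$); waiting customers exist only when all $K$ servers are busy, so $n_j=0$ for $j<K$. *)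

theory Defs
  imports "HOL-Analysis.Analysis"
begin

text \<open>Servers are t_0,...,t_{K-1}, identified with the naturals below K; service rates mu.
 A state (T_1,n_1,...,T_i,n_i) is the list [(T_1,n_1),...,(T_i,n_i)]; the empty list is state (0).\<close>

type_synonym qstate = "(nat \<times> nat) list"

definition valid_state :: "nat \<Rightarrow> qstate \<Rightarrow> bool" where
  "valid_state K s \<longleftrightarrow> distinct (map fst s) \<and> set (map fst s) \<subseteq> {..<K} \<and>
     (\<forall>j < length s. snd (s ! j) \<noteq> 0 \<longrightarrow> (j = length s - 1 \<and> length s = K))"

definition depart :: "nat \<Rightarrow> qstate \<Rightarrow> nat \<Rightarrow> qstate" where
  "depart K s j =
    (if length s = K \<and> s \<noteq> [] \<and> snd (last s) > 0 then
       (let s0 = butlast s @ [(fst (last s), 0)]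
        in take j s0 @ drop (Suc j) s0 @ [(fst (s ! j), snd (last s) - 1)])
     else take j s @ drop (Suc j) s)"

definition trans :: "real \<Rightarrow> (nat \<Rightarrow> real) \<Rightarrow> nat \<Rightarrow> qstate \<Rightarrow> (qstate \<times> real) list" where
  "trans lam mu K s =
     (if length s < K then
        map (\<lambda>t. (s @ [(t, 0)], lam / real (K - length s))) (filter (\<lambda>t. t \<notin> set (map fst s)) [0..<K])
      else [(butlast s @ [(fst (last s), Suc (snd (last s)))], lam)])
     @ map (\<lambda>j. (depart K s j, mu (fst (s ! j)))) [0..<length s]"

definition rate :: "real \<Rightarrow> (nat \<Rightarrow> real) \<Rightarrow> nat \<Rightarrow> qstate \<Rightarrow> qstate \<Rightarrow> real" where
  "rate lam mu K s s' = sum_list (map snd (filter (\<lambda>x. fst x = s') (trans lam mu K s)))"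

definition stationary :: "real \<Rightarrow> (nat \<Rightarrow> real) \<Rightarrow> nat \<Rightarrow> (qstate \<Rightarrow> real) \<Rightarrow> bool" where
  "stationary lam mu K p \<longleftrightarrow>
     (\<forall>s. p s \<ge> 0) \<and> (\<forall>s. \<not> valid_state K s \<longrightarrow> p s = 0) \<and> (p has_sum 1) UNIV \<and>
     (\<forall>s. valid_state K s \<longrightarrow>
        p s * (\<Sum>\<^sub>\<infinity>s'\<in>UNIV - {s}. rate lam mu K s s') =
        (\<Sum>\<^sub>\<infinity>s'\<in>UNIV - {s}. p s' * rate lam mu K s' s))"

text \<open>Unnormalised weight pi(s)/pi((0)) from the theorem.\<close>
definition weight :: "real \<Rightarrow> (nat \<Rightarrow> real) \<Rightarrow> nat \<Rightarrow> qstate \<Rightarrow> real" where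
  "weight lam mu K s =
     (let i = length s;
          P = (\<Prod>j<i. \<Sum>l\<le>j. mu (fst (s ! l)));
          m = (\<Sum>l<K. mu l)
      in if i < K then lam ^ i * fact (K - i) / (fact K * P)
         else lam ^ K / (fact K * P) * (lam / m) ^ snd (last s))"

end

theory Submission
  imports Defs
begin

(* The weight w of the theorem satisfies the global balance equations. The outflow of a state s is
   w(s) (lam + busy(s)). The predecessors of s by a departure arise by re-inserting the departed
   customer's server at any position j of the list (and, when all servers are busy, by lengthening
   the queue); with P the product of prefix sums of service rates,
   sum_j mu(x) / P(x inserted at j) = 1 / P, so these transitions bring in exactly lam w(s). The
   arrival into s from the state without its last customer brings in w(s) busy(s).
   Since lam < mu, the weights of the full states decay geometrically in the queue length, so w is
   summable and its normalisation is stationary.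
   For uniqueness, the difference d of a stationary p and p((0)) w is a summable signed solution of
   the balance equations. Summing |d| against them forces equality in the triangle inequality, so
   d(s) = 0 implies d(t) = 0 whenever t jumps to s. Every nonempty state jumps by a departure to a
   state with fewer customers, so d, which vanishes at (0), vanishes everywhere. *)

lemma map_butlast_last: "xs \<noteq> [] \<Longrightarrow> map f xs = map f (butlast xs) @ [f (last xs)]"
  by (induction xs) auto

lemma butlast_last_pair: "xs \<noteq> [] \<Longrightarrow> snd (last xs) = n \<Longrightarrow> butlast xs @ [(fst (last xs), n)] = xs"
  by (metis append_butlast_last_id prod.collapse)

lemma mset_insert_at: "mset (take j xs @ x # drop j xs) = mset (x # xs)"
proof -
  have "mset (take j xs) + mset (drop j xs) = mset xs"
    by (metis append_take_drop_id mset_append)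
  then show ?thesis by simp
qed

lemma set_insert_at: "set (take j xs @ x # drop j xs) = insert x (set xs)"
  by (metis mset_insert_at set_mset_mset list.set(2))

lemma distinct_insert_at: "distinct (x # xs) \<Longrightarrow> distinct (take j xs @ x # drop j xs)"
  by (metis mset_insert_at mset_eq_imp_distinct_iff)

lemma sum_list_insert_at: "sum_list (take j xs @ x # drop j xs) = x + sum_list (xs :: 'a :: comm_monoid_add list)"
  by (metis mset_insert_at sum_mset_sum_list sum_list.Cons)

lemma map_insert_at: "map f (take j xs @ x # drop j xs) = take j (map f xs) @ f x # drop j (map f xs)"
  by (simp add: take_map drop_map)

section \<open>Products of prefix sums\<close>

definition prefix_sums_prod :: "('a \<Rightarrow> real) \<Rightarrow> 'a list \<Rightarrow> real" where
  "prefix_sums_prod f xs = (\<Prod>j<length xs. \<Sum>l\<le>j. f (xs ! l))"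

lemma prefix_sums_prod_Nil [simp]: "prefix_sums_prod f [] = 1"
  by (simp add: prefix_sums_prod_def)

lemma prefix_sums_prod_snoc:
  "prefix_sums_prod f (xs @ [x]) = prefix_sums_prod f xs * (sum_list (map f xs) + f x)"
proof -
  have "(\<Sum>l\<le>length xs. f ((xs @ [x]) ! l)) = sum_list (map f xs) + f x"
    by (simp add: lessThan_Suc_atMost[symmetric] nth_append sum_list_sum_nth atLeast0LessThan)
  moreover have "(\<Prod>j<length xs. \<Sum>l\<le>j. f ((xs @ [x]) ! l)) = prefix_sums_prod f xs"
    unfolding prefix_sums_prod_def by (intro prod.cong sum.cong refl) (auto simp: nth_append)
  ultimately show ?thesis
    by (simp add: prefix_sums_prod_def)
qed

lemma prefix_sums_prod_pos: "(\<And>x. x \<in> set xs \<Longrightarrow> f x > 0) \<Longrightarrow> prefix_sums_prod f xs > 0"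
proof (induction xs rule: rev_induct)
  case (snoc x xs)
  have "sum_list (map f xs) \<ge> 0"
    using snoc.prems by (intro sum_list_nonneg) (auto intro: less_imp_le)
  moreover have "f x > 0" and "prefix_sums_prod f xs > 0"
    using snoc by auto
  ultimately show ?case
    by (simp add: prefix_sums_prod_snoc)
qed simp

lemma divide_add_divide_telescope:
  fixes p A c :: real
  assumes "p > 0" "A > 0" "c > 0"
  shows "1 / (p * (A + c)) + c / (p * A * (A + c)) = 1 / (p * A)"
proof -
  have "1 / (p * (A + c)) + c / (p * A * (A + c)) = (A + c) / (p * A * (A + c))"
    using assms by (simp add: add_divide_distrib)
  then show ?thesis
    using assms by simp
qed

text \<open>Proof by induction from the right: for every position except the last, appending a multiplies
  the product by the same factor, and the remaining term completes the telescoping.\<close>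
lemma sum_insert_at_prefix_sums_prod:
  assumes "\<And>x. x \<in> set xs \<Longrightarrow> f x > 0" and "f y > 0"
  shows "(\<Sum>j\<le>length xs. f y / prefix_sums_prod f (take j xs @ y # drop j xs)) = 1 / prefix_sums_prod f xs"
  using assms(1)
proof (induction xs rule: rev_induct)
  case Nil
  then show ?case
    using assms(2) by (simp add: prefix_sums_prod_snoc[of f "[]", simplified])
next
  case (snoc a xs)
  let ?P = "prefix_sums_prod f" and ?n = "length xs"
  define T where "T = sum_list (map f xs)"
  have P: "?P xs > 0" and a: "f a > 0"
    using snoc.prems by (auto intro: prefix_sums_prod_pos)
  have T: "T \<ge> 0"
    unfolding T_def using snoc.prems by (intro sum_list_nonneg) (auto intro: less_imp_le)
  have inner: "?P (take j (xs @ [a]) @ y # drop j (xs @ [a])) = ?P (take j xs @ y # drop j xs) * (T + f y + f a)"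
    if "j \<le> ?n" for j
  proof -
    have "take j (xs @ [a]) @ y # drop j (xs @ [a]) = (take j xs @ y # drop j xs) @ [a]"
      using that by simp
    moreover have "sum_list (map f (take j xs @ y # drop j xs)) = f y + T"
      by (simp only: map_insert_at sum_list_insert_at T_def)
    ultimately show ?thesis
      by (simp only: prefix_sums_prod_snoc) (simp add: algebra_simps)
  qed
  have split: "(\<Sum>j\<le>?n. f y / ?P (take j (xs @ [a]) @ y # drop j (xs @ [a])))
      = (\<Sum>j\<le>?n. f y / ?P (take j xs @ y # drop j xs)) / (T + f y + f a)"
    unfolding sum_divide_distrib by (intro sum.cong refl) (simp only: inner atMost_iff divide_divide_eq_left)
  have last: "?P ((xs @ [a]) @ [y]) = ?P xs * (T + f a) * (T + f a + f y)"
    by (simp only: prefix_sums_prod_snoc T_def map_append sum_list_append) simp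
  have "(\<Sum>j\<le>length (xs @ [a]). f y / ?P (take j (xs @ [a]) @ y # drop j (xs @ [a])))
      = (\<Sum>j\<le>?n. f y / ?P (take j (xs @ [a]) @ y # drop j (xs @ [a]))) + f y / ?P ((xs @ [a]) @ [y])"
    by simp
  also have "\<dots> = 1 / (?P xs * (T + f y + f a)) + f y / (?P xs * (T + f a) * (T + f a + f y))"
    using snoc.IH snoc.prems by (simp only: split last divide_divide_eq_left) simp
  also have "\<dots> = 1 / ?P (xs @ [a])"
    using divide_add_divide_telescope[of "?P xs" "T + f a" "f y"] P a T assms(2)
    by (simp add: prefix_sums_prod_snoc ac_simps flip: T_def)
  finally show ?case .
qed

section \<open>Nonnegative double sums and balance equations\<close>

lemma nonneg_has_sum_columns:
  fixes G :: "'a \<times> 'b \<Rightarrow> real"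
  assumes nonneg: "\<And>p. G p \<ge> 0"
    and rows: "\<And>x. ((\<lambda>y. G (x, y)) has_sum a x) UNIV" and total: "(a has_sum S) UNIV"
  shows "\<And>y. (\<lambda>x. G (x, y)) summable_on UNIV"
    and "((\<lambda>y. \<Sum>\<^sub>\<infinity>x. G (x, y)) has_sum S) UNIV"
proof -
  have "(G has_sum S) (UNIV \<times> UNIV)"
    using rows total nonneg
    by (intro has_sum_SigmaI[OF rows total] summable_on_SigmaI[OF rows]) (auto intro: has_sum_imp_summable)
  then have swapped: "((\<lambda>(y, x). G (x, y)) has_sum S) (UNIV \<times> UNIV)"
    by (subst (asm) has_sum_swap) simp
  show columns: "(\<lambda>x. G (x, y)) summable_on UNIV" for y
    using summable_on_SigmaD1[of "\<lambda>y x. G (x, y)", OF has_sum_imp_summable[OF swapped]] by simp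
  show "((\<lambda>y. \<Sum>\<^sub>\<infinity>x. G (x, y)) has_sum S) UNIV"
    using has_sum_SigmaD[OF swapped] columns by (auto intro: has_sum_infsum)
qed

lemma has_sum_eq_if_le:
  fixes f g :: "'a \<Rightarrow> real"
  assumes "(f has_sum S) A" "(g has_sum S) A" "\<And>x. x \<in> A \<Longrightarrow> f x \<le> g x" "x \<in> A"
  shows "f x = g x"
proof -
  have "((\<lambda>x. g x - f x) has_sum 0) A"
    using has_sum_add[OF assms(2) has_sum_uminusI[OF assms(1)]] by simp
  then have "g x - f x = 0"
    by (rule nonneg_has_sum_le_0D) (use assms in auto)
  then show ?thesis by simp
qed

lemma summable_abs_mult_bounded:
  fixes d g :: "'a \<Rightarrow> real"
  assumes "d summable_on UNIV" and "\<And>x. x \<notin> V \<Longrightarrow> d x = 0"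
    and "\<And>x. x \<in> V \<Longrightarrow> g x \<le> C" and "\<And>x. x \<in> V \<Longrightarrow> g x \<ge> 0"
  shows "(\<lambda>x. \<bar>d x\<bar> * g x) summable_on UNIV"
proof (rule summable_on_comparison_test)
  show "(\<lambda>x. \<bar>d x\<bar> * C) summable_on UNIV"
    using summable_on_iff_abs_summable_on_real[THEN iffD1, OF assms(1)] by (intro summable_on_cmult_left) simp
  show "\<bar>d x\<bar> * g x \<le> \<bar>d x\<bar> * C" "0 \<le> \<bar>d x\<bar> * g x" for x
    using assms(2-4)[of x] by (cases "x \<in> V"; auto intro: mult_left_mono)+
qed

text \<open>For a summable signed solution d of balance equations with bounded exit rates, summing |d|
  against the equations gives |d y| out y \<le> \<Sum>x |d x| R x y by the triangle inequality, while both
  sides have the same total by Tonelli. Hence equality holds at every y.\<close>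
lemma balance_abs_eq:
  fixes d :: "'a \<Rightarrow> real" and R :: "'a \<Rightarrow> 'a \<Rightarrow> real"
  assumes d_summable: "d summable_on UNIV"
    and d_outside: "\<And>x. x \<notin> V \<Longrightarrow> d x = 0"
    and R_nonneg: "\<And>x y. x \<in> V \<Longrightarrow> R x y \<ge> 0"
    and R_rows: "\<And>x. x \<in> V \<Longrightarrow> (R x has_sum out x) UNIV"
    and out_bounded: "\<And>x. x \<in> V \<Longrightarrow> out x \<le> C"
    and balance: "\<And>y. y \<in> V \<Longrightarrow> d y * out y = (\<Sum>\<^sub>\<infinity>x. d x * R x y)"
  defines "G \<equiv> \<lambda>(x, y). if x \<in> V then \<bar>d x\<bar> * R x y else 0"
  shows "\<And>y. (\<lambda>x. G (x, y)) summable_on UNIV"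
    and "\<bar>d y\<bar> * out y = (\<Sum>\<^sub>\<infinity>x. G (x, y))"
proof -
  define a where "a x = \<bar>d x\<bar> * out x" for x
  have G_nonneg: "G p \<ge> 0" for p
    by (cases p) (simp add: G_def R_nonneg)
  have rows: "((\<lambda>y. G (x, y)) has_sum a x) UNIV" for x
    using has_sum_cmult_right[OF R_rows, of x "\<bar>d x\<bar>"] d_outside[of x]
    by (cases "x \<in> V") (auto simp: G_def a_def)
  have "a summable_on UNIV"
    unfolding a_def using has_sum_nonneg[OF R_rows] R_nonneg
    by (intro summable_abs_mult_bounded[OF d_summable d_outside out_bounded]) auto
  then obtain columns: "\<And>y. (\<lambda>x. G (x, y)) summable_on UNIV"
    and b_sum: "((\<lambda>y. \<Sum>\<^sub>\<infinity>x. G (x, y)) has_sum (\<Sum>\<^sub>\<infinity>x. a x)) UNIV"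
    using nonneg_has_sum_columns[OF G_nonneg rows has_sum_infsum] by blast
  show "(\<lambda>x. G (x, y)) summable_on UNIV" for y
    by (rule columns)
  have a_le: "a y \<le> (\<Sum>\<^sub>\<infinity>x. G (x, y))" for y
  proof (cases "y \<in> V")
    case True
    have abs_eq: "\<bar>d x * R x y\<bar> = G (x, y)" for x
      using R_nonneg[of x y] d_outside[of x] by (cases "x \<in> V") (auto simp: G_def abs_mult)
    have "a y = \<bar>d y * out y\<bar>"
      using has_sum_nonneg[OF R_rows[OF True]] R_nonneg[OF True] by (simp add: a_def abs_mult)
    also have "\<dots> = norm (\<Sum>\<^sub>\<infinity>x. d x * R x y)"
      using balance[OF True] by simp
    also have "\<dots> \<le> (\<Sum>\<^sub>\<infinity>x. G (x, y))"
      using norm_infsum_bound[of "\<lambda>x. d x * R x y" UNIV] columns[of y] by (simp add: abs_eq)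
    finally show ?thesis .
  next
    case False
    then show ?thesis
      using d_outside by (simp add: a_def infsum_nonneg G_nonneg)
  qed
  have "a y = (\<Sum>\<^sub>\<infinity>x. G (x, y))"
    using has_sum_eq_if_le[OF has_sum_infsum[OF \<open>a summable_on UNIV\<close>] b_sum a_le] by simp
  then show "\<bar>d y\<bar> * out y = (\<Sum>\<^sub>\<infinity>x. G (x, y))"
    by (simp add: a_def)
qed

lemma balance_solution_zero_propagates:
  fixes d :: "'a \<Rightarrow> real" and R :: "'a \<Rightarrow> 'a \<Rightarrow> real"
  assumes d_summable: "d summable_on UNIV"
    and d_outside: "\<And>x. x \<notin> V \<Longrightarrow> d x = 0"
    and R_nonneg: "\<And>x y. x \<in> V \<Longrightarrow> R x y \<ge> 0"
    and R_rows: "\<And>x. x \<in> V \<Longrightarrow> (R x has_sum out x) UNIV"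
    and out_bounded: "\<And>x. x \<in> V \<Longrightarrow> out x \<le> C"
    and balance: "\<And>y. y \<in> V \<Longrightarrow> d y * out y = (\<Sum>\<^sub>\<infinity>x. d x * R x y)"
    and "d s = 0" and "t \<in> V" and "R t s > 0"
  shows "d t = 0"
proof -
  note abs_eq = balance_abs_eq[OF d_summable d_outside R_nonneg R_rows out_bounded balance]
  let ?G = "\<lambda>(x, y). if x \<in> V then \<bar>d x\<bar> * R x y else 0"
  have "(\<Sum>\<^sub>\<infinity>x. ?G (x, s)) = 0"
    using abs_eq(2)[where y = s] \<open>d s = 0\<close> by simp
  then have "?G (t, s) = 0"
    by (intro nonneg_infsum_le_0D[OF _ abs_eq(1)]) (auto simp: R_nonneg)
  then show ?thesis
    using \<open>t \<in> V\<close> \<open>R t s > 0\<close> by simp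
qed

definition no_waiting :: "qstate \<Rightarrow> bool" where
  "no_waiting s \<longleftrightarrow> (\<forall>p\<in>set s. snd p = 0)"

definition set_queue :: "qstate \<Rightarrow> nat \<Rightarrow> qstate" where
  "set_queue s n = butlast s @ [(fst (last s), n)]"

lemma set_queue_simps:
  assumes "s \<noteq> []"
  shows "map fst (set_queue s n) = map fst s" "length (set_queue s n) = length s"
    "last (set_queue s n) = (fst (last s), n)" "butlast (set_queue s n) = butlast s" "set_queue s n \<noteq> []"
  using map_butlast_last[OF assms, of fst] assms by (simp_all add: set_queue_def)

lemma no_waiting_butlast: "no_waiting s \<Longrightarrow> no_waiting (butlast s)"
  unfolding no_waiting_def by (auto dest: in_set_butlastD)

lemma no_waiting_insert_at: "no_waiting s \<Longrightarrow> no_waiting (take j s @ (x, 0) # drop j s)"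
  unfolding no_waiting_def by (auto dest: in_set_takeD in_set_dropD)

lemma no_waiting_remove: "no_waiting s \<Longrightarrow> no_waiting (take j s @ drop (Suc j) s)"
  unfolding no_waiting_def by (auto dest: in_set_takeD in_set_dropD)

lemma valid_state_iff:
  "valid_state K s \<longleftrightarrow> distinct (map fst s) \<and> set (map fst s) \<subseteq> {..<K} \<and> no_waiting (butlast s) \<and>
     (s \<noteq> [] \<longrightarrow> length s \<noteq> K \<longrightarrow> snd (last s) = 0)"
proof -
  have "(\<forall>j < length s. snd (s ! j) \<noteq> 0 \<longrightarrow> j = length s - 1 \<and> length s = K) \<longleftrightarrow>
      no_waiting (butlast s) \<and> (s \<noteq> [] \<longrightarrow> length s \<noteq> K \<longrightarrow> snd (last s) = 0)"
    (is "?nth \<longleftrightarrow> ?butlast")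
  proof
    assume nth: ?nth
    have "snd p = 0" if "p \<in> set (butlast s)" for p
    proof -
      obtain j where "j < length s - 1" "p = s ! j"
        using \<open>p \<in> set (butlast s)\<close> by (auto simp: in_set_conv_nth nth_butlast)
      then show ?thesis
        using nth by (metis One_nat_def Suc_pred diff_le_self length_greater_0_conv less_le_trans less_irrefl_nat list.size(3) not_less_zero)
    qed
    then show ?butlast
      using nth by (auto simp: no_waiting_def last_conv_nth)
  next
    assume ?butlast
    show ?nth
    proof (intro allI impI)
      fix j assume j: "j < length s" and "snd (s ! j) \<noteq> 0"
      moreover have "j = length s - 1 \<or> s ! j \<in> set (butlast s)"
        using j by (metis interval_class.less_imp_less_eq_dec length_butlast nless_le nth_butlast nth_mem)
      ultimately show "j = length s - 1 \<and> length s = K"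
        using \<open>?butlast\<close> by (auto simp: no_waiting_def last_conv_nth)
    qed
  qed
  then show ?thesis
    unfolding valid_state_def by blast
qed

lemma valid_stateI:
  "distinct (map fst s) \<Longrightarrow> set (map fst s) \<subseteq> {..<K} \<Longrightarrow> no_waiting s \<Longrightarrow> valid_state K s"
  unfolding valid_state_iff no_waiting_def by (auto dest: in_set_butlastD)

lemma valid_state_length_le: "valid_state K s \<Longrightarrow> length s \<le> K"
  unfolding valid_state_def
  by (metis card_lessThan card_mono distinct_card finite_lessThan length_map)

lemma valid_state_full_servers: "valid_state K s \<Longrightarrow> length s = K \<Longrightarrow> set (map fst s) = {..<K}"
  unfolding valid_state_def
  by (metis card_lessThan card_subset_eq distinct_card finite_lessThan length_map)

lemma valid_state_no_waiting:
  assumes "valid_state K s" and "length s < K \<or> s = [] \<or> snd (last s) = 0"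
  shows "no_waiting s"
proof (cases "s = []")
  case False
  then have "set s = insert (last s) (set (butlast s))"
    by (metis append_butlast_last_id list.simps(15) set_rotate1 rotate1.simps(2))
  then show ?thesis
    using assms False by (auto simp: valid_state_iff no_waiting_def)
qed (simp add: no_waiting_def)

locale hetero_queue =
  fixes lam :: real and mu :: "nat \<Rightarrow> real" and K :: nat
  assumes K_pos: "K \<ge> 1" and lam_pos: "lam > 0" and mu_pos: "\<And>l. l < K \<Longrightarrow> mu l > 0"
    and stable: "lam < (\<Sum>l<K. mu l)"
begin

abbreviation total_rate :: real where
  "total_rate \<equiv> \<Sum>l<K. mu l"

lemma total_rate_pos: "total_rate > 0"
  using stable lam_pos by linarith

text \<open>Labels of the transitions out of s: Inl t is an arrival (joining idle server t, or the queue
  when no server is idle), Inr j is the departure of the customer at position j.\<close>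
definition trans_labels :: "qstate \<Rightarrow> (nat + nat) list" where
  "trans_labels s =
     (if length s < K then map Inl (filter (\<lambda>t. t \<notin> set (map fst s)) [0..<K]) else [Inl 0])
     @ map Inr [0..<length s]"

definition trans_target :: "qstate \<Rightarrow> nat + nat \<Rightarrow> qstate" where
  "trans_target s l =
     (case l of
       Inl t \<Rightarrow> if length s < K then s @ [(t, 0)] else butlast s @ [(fst (last s), Suc (snd (last s)))]
     | Inr j \<Rightarrow> depart K s j)"

definition trans_rate :: "qstate \<Rightarrow> nat + nat \<Rightarrow> real" where
  "trans_rate s l =
     (case l of
       Inl t \<Rightarrow> if length s < K then lam / real (K - length s) else lam
     | Inr j \<Rightarrow> mu (fst (s ! j)))"

definition in_trans :: "qstate \<Rightarrow> (qstate \<times> (nat + nat)) set" where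
  "in_trans s = {(s', l). valid_state K s' \<and> l \<in> set (trans_labels s') \<and> trans_target s' l = s}"

definition jump_rate :: "qstate \<Rightarrow> qstate \<Rightarrow> real" where
  "jump_rate t s = (if s = t then 0 else rate lam mu K t s)"

definition busy_rate :: "qstate \<Rightarrow> real" where
  "busy_rate s = (\<Sum>j<length s. mu (fst (s ! j)))"

definition exit_rate :: "qstate \<Rightarrow> real" where
  "exit_rate s = (\<Sum>l\<in>set (trans_labels s). trans_rate s l)"

definition customers :: "qstate \<Rightarrow> nat" where
  "customers s = (if s = [] then 0 else length s + snd (last s))"

lemma trans_labelsE:
  assumes "l \<in> set (trans_labels s)"
  obtains (arrival) t where "l = Inl t" "length s < K \<Longrightarrow> t < K \<and> t \<notin> set (map fst s)" "\<not> length s < K \<Longrightarrow> t = 0"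
    | (departure) j where "l = Inr j" "j < length s"
  using assms by (auto simp: trans_labels_def split: if_splits)

lemma rate_eq: "rate lam mu K s s' = (\<Sum>l\<in>{l \<in> set (trans_labels s). trans_target s l = s'}. trans_rate s l)"
proof -
  have "trans lam mu K s = map (\<lambda>l. (trans_target s l, trans_rate s l)) (trans_labels s)"
    by (simp add: trans_def trans_labels_def trans_target_def trans_rate_def comp_def)
  then have "rate lam mu K s s' = sum_list (map (trans_rate s) (filter (\<lambda>l. trans_target s l = s') (trans_labels s)))"
    by (simp add: rate_def filter_map comp_def)
  also have "\<dots> = sum (trans_rate s) (set (filter (\<lambda>l. trans_target s l = s') (trans_labels s)))"
    by (rule sum_list_distinct_conv_sum_set) (auto simp: trans_labels_def distinct_map intro: inj_onI)
  finally show ?thesis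
    by simp
qed

lemma depart_with_queue:
  "length s = K \<Longrightarrow> 0 < snd (last s) \<Longrightarrow>
   depart K s j = take j (set_queue s 0) @ drop (Suc j) (set_queue s 0) @ [(fst (s ! j), snd (last s) - 1)]"
  using K_pos by (auto simp: depart_def set_queue_def Let_def)

lemma depart_without_queue: "\<not> (length s = K \<and> 0 < snd (last s)) \<Longrightarrow> depart K s j = take j s @ drop (Suc j) s"
  by (auto simp: depart_def)

lemma customers_no_waiting: "no_waiting s \<Longrightarrow> customers s = length s"
  by (auto simp: customers_def no_waiting_def)

lemma customers_depart_less:
  assumes v: "valid_state K s" and j: "j < length s"
  shows "customers (depart K s j) < customers s"
proof (cases "length s = K \<and> 0 < snd (last s)")
  case True
  then have "s \<noteq> []"
    using K_pos by auto
  with True j have "length (depart K s j) = K" "snd (last (depart K s j)) = snd (last s) - 1"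
    by (simp_all add: depart_with_queue set_queue_simps)
  with True show ?thesis
    by (auto simp: customers_def)
next
  case False
  then have "no_waiting s"
    using valid_state_length_le[OF v] by (intro valid_state_no_waiting[OF v]) auto
  then show ?thesis
    using False j by (simp add: depart_without_queue no_waiting_remove customers_no_waiting)
qed

lemma trans_target_neq:
  assumes v: "valid_state K s" and l: "l \<in> set (trans_labels s)"
  shows "trans_target s l \<noteq> s"
  using l
proof (cases rule: trans_labelsE)
  case (arrival t)
  then show ?thesis
    using K_pos by (cases "length s < K") (auto simp: trans_target_def dest: arg_cong[of _ _ "\<lambda>s. snd (last s)"])
next
  case (departure j)
  then have "customers (trans_target s l) < customers s"
    using customers_depart_less[OF v] by (simp add: trans_target_def)
  then show ?thesis
    by auto
qed

lemma trans_rate_pos: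
  assumes v: "valid_state K s" and l: "l \<in> set (trans_labels s)"
  shows "trans_rate s l > 0"
  using l
proof (cases rule: trans_labelsE)
  case (arrival t)
  then show ?thesis
    using lam_pos by (auto simp: trans_rate_def)
next
  case (departure j)
  then have "fst (s ! j) \<in> set (map fst s)"
    by simp
  then have "fst (s ! j) < K"
    using v by (auto simp: valid_state_def)
  then show ?thesis
    using departure mu_pos by (simp add: trans_rate_def)
qed

lemma rate_nonneg: "valid_state K s \<Longrightarrow> rate lam mu K s s' \<ge> 0"
  unfolding rate_eq by (rule sum_nonneg) (auto dest: trans_rate_pos intro: less_imp_le)

lemma rate_target_pos: "valid_state K s \<Longrightarrow> l \<in> set (trans_labels s) \<Longrightarrow> rate lam mu K s (trans_target s l) > 0"
  unfolding rate_eq by (rule sum_pos2[where i = l]) (auto intro: trans_rate_pos less_imp_le)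

lemma jump_rate_nonneg: "valid_state K t \<Longrightarrow> jump_rate t s \<ge> 0"
  by (simp add: jump_rate_def rate_nonneg)

lemma jump_rate_has_sum:
  assumes v: "valid_state K t"
  shows "(jump_rate t has_sum exit_rate t) UNIV"
proof (rule has_sum_finite_neutralI[where B = "trans_target t ` set (trans_labels t)"])
  show "jump_rate t s = 0" if "s \<in> UNIV - trans_target t ` set (trans_labels t)" for s
    using that unfolding jump_rate_def rate_eq by (auto intro!: sum.neutral)
  have "exit_rate t = (\<Sum>s\<in>trans_target t ` set (trans_labels t). \<Sum>l\<in>{l \<in> set (trans_labels t). trans_target t l = s}. trans_rate t l)"
    unfolding exit_rate_def by (rule sum.image_gen) simp
  also have "\<dots> = (\<Sum>s\<in>trans_target t ` set (trans_labels t). jump_rate t s)"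
    using trans_target_neq[OF v] by (intro sum.cong refl) (auto simp: jump_rate_def rate_eq)
  finally show "exit_rate t = (\<Sum>s\<in>trans_target t ` set (trans_labels t). jump_rate t s)" .
qed simp_all

lemma exit_rate_eq:
  assumes v: "valid_state K s"
  shows "exit_rate s = lam + busy_rate s"
proof -
  define A where
    "A = set (if length s < K then map Inl (filter (\<lambda>t. t \<notin> set (map fst s)) [0..<K]) else [Inl 0 :: nat + nat])"
  have arrivals: "sum (trans_rate s) A = lam"
  proof (cases "length s < K")
    case True
    have "A = Inl ` ({..<K} - set (map fst s))"
      using True by (auto simp: A_def)
    moreover have "card ({..<K} - set (map fst s)) = K - length s"
      using v distinct_card[of "map fst s"] by (simp add: card_Diff_subset valid_state_def)
    ultimately show ?thesis
      using True by (simp add: sum.reindex trans_rate_def)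
  next
    case False
    then show ?thesis
      by (simp add: A_def trans_rate_def)
  qed
  have departures: "sum (trans_rate s) (Inr ` {..<length s}) = busy_rate s"
    by (simp add: sum.reindex busy_rate_def trans_rate_def)
  have labels: "set (trans_labels s) = A \<union> Inr ` {..<length s}"
    by (auto simp: trans_labels_def A_def)
  have "exit_rate s = sum (trans_rate s) A + sum (trans_rate s) (Inr ` {..<length s})"
    unfolding exit_rate_def labels by (rule sum.union_disjoint) (auto simp: A_def)
  then show ?thesis
    using arrivals departures by simp
qed

lemma busy_rate_eq_sum_servers:
  assumes "valid_state K s"
  shows "busy_rate s = sum mu (set (map fst s))"
proof -
  have "busy_rate s = sum_list (map mu (map fst s))"
    unfolding busy_rate_def by (simp add: sum_list_sum_nth atLeast0LessThan)
  also have "\<dots> = sum mu (set (map fst s))"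
    using assms by (intro sum_list_distinct_conv_sum_set) (simp add: valid_state_def)
  finally show ?thesis .
qed

lemma busy_rate_le: "valid_state K s \<Longrightarrow> busy_rate s \<le> total_rate"
  unfolding busy_rate_eq_sum_servers
  by (rule sum_mono2) (auto simp: valid_state_def intro: less_imp_le mu_pos)

lemma busy_rate_full: "valid_state K s \<Longrightarrow> length s = K \<Longrightarrow> busy_rate s = total_rate"
  using busy_rate_eq_sum_servers valid_state_full_servers by metis

lemma exit_rate_le: "valid_state K t \<Longrightarrow> exit_rate t \<le> lam + total_rate"
  using exit_rate_eq busy_rate_le by simp

lemma jump_rate_le:
  assumes "valid_state K t"
  shows "jump_rate t s \<le> lam + total_rate"
proof -
  have "(jump_rate t has_sum jump_rate t s) {s}"
    by (rule has_sum_finiteI) simp_all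
  then have "jump_rate t s \<le> exit_rate t"
    by (rule has_sum_mono_neutral[OF _ jump_rate_has_sum[OF assms]]) (auto intro: jump_rate_nonneg[OF assms])
  then show ?thesis
    using exit_rate_le[OF assms] by simp
qed

lemma departure_into_partial:
  assumes v: "valid_state K s" and len: "length s < K"
    and x: "x < K" "x \<notin> set (map fst s)" and j: "j \<le> length s"
  shows "(take j s @ (x, 0) # drop j s, Inr j) \<in> in_trans s"
    and "trans_rate (take j s @ (x, 0) # drop j s) (Inr j) = mu x"
proof -
  let ?s = "take j s @ (x, 0) # drop j s"
  have "no_waiting ?s"
    using v len by (intro no_waiting_insert_at valid_state_no_waiting) auto
  moreover have "distinct (map fst ?s)"
    unfolding map_insert_at fst_conv using v x by (intro distinct_insert_at) (simp add: valid_state_def)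
  moreover have "set (map fst ?s) \<subseteq> {..<K}"
    unfolding map_insert_at fst_conv set_insert_at using v x by (auto simp: valid_state_def)
  ultimately have "valid_state K ?s"
    by (intro valid_stateI)
  moreover have "snd (last ?s) = 0"
    using \<open>no_waiting ?s\<close> unfolding no_waiting_def by (metis Nil_is_append_conv last_in_set list.distinct(1))
  then have "trans_target ?s (Inr j) = s"
    using j by (simp add: trans_target_def depart_without_queue)
  moreover have "Inr j \<in> set (trans_labels ?s)"
    using j by (auto simp: trans_labels_def)
  ultimately show "(?s, Inr j) \<in> in_trans s"
    by (simp add: in_trans_def)
  show "trans_rate ?s (Inr j) = mu x"
    using j by (simp add: trans_rate_def nth_append)
qed

lemma arrival_into_partial:
  assumes v: "valid_state K s" and len: "length s < K" and ne: "s \<noteq> []"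
  shows "(butlast s, Inl (fst (last s))) \<in> in_trans s"
    and "trans_rate (butlast s) (Inl (fst (last s))) = lam / real (K - (length s - 1))"
proof -
  have "no_waiting s"
    using v len by (intro valid_state_no_waiting) auto
  have fst_s: "map fst s = map fst (butlast s) @ [fst (last s)]"
    using ne by (rule map_butlast_last)
  have "valid_state K (butlast s)"
    using v fst_s \<open>no_waiting s\<close> by (intro valid_stateI no_waiting_butlast) (auto simp: valid_state_def)
  moreover have "Inl (fst (last s)) \<in> set (trans_labels (butlast s))"
    using v len fst_s by (auto simp: trans_labels_def valid_state_def)
  moreover have "snd (last s) = 0"
    using \<open>no_waiting s\<close> last_in_set[OF ne] unfolding no_waiting_def by blast
  then have "butlast s @ [(fst (last s), 0)] = s"
    by (rule butlast_last_pair[OF ne])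
  ultimately show "(butlast s, Inl (fst (last s))) \<in> in_trans s"
    using less_imp_diff_less[OF len] by (simp add: in_trans_def trans_target_def)
  show "trans_rate (butlast s) (Inl (fst (last s))) = lam / real (K - (length s - 1))"
    using less_imp_diff_less[OF len] by (simp add: trans_rate_def)
qed

lemma arrival_into_full:
  assumes v: "valid_state K s" and len: "length s = K"
  defines "a \<equiv> if snd (last s) = 0 then (butlast s, Inl (fst (last s))) else (set_queue s (snd (last s) - 1), Inl 0)"
  shows "a \<in> in_trans s" and "trans_rate (fst a) (snd a) = lam"
proof -
  have ne: "s \<noteq> []"
    using len K_pos by auto
  show "a \<in> in_trans s"
  proof (cases "snd (last s) = 0")
    case True
    have fst_s: "map fst s = map fst (butlast s) @ [fst (last s)]"
      using ne by (rule map_butlast_last)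
    have "valid_state K (butlast s)"
      using v True fst_s valid_state_no_waiting[OF v]
      by (intro valid_stateI no_waiting_butlast) (auto simp: valid_state_def)
    moreover have "Inl (fst (last s)) \<in> set (trans_labels (butlast s))"
      using v len ne K_pos fst_s by (auto simp: trans_labels_def valid_state_def)
    moreover have "butlast s @ [(fst (last s), 0)] = s"
      using ne True by (rule butlast_last_pair)
    ultimately show ?thesis
      using True len ne K_pos by (simp add: a_def in_trans_def trans_target_def)
  next
    case False
    let ?s = "set_queue s (snd (last s) - 1)"
    have "valid_state K ?s" "length ?s = K"
      using v ne len by (simp_all add: valid_state_iff set_queue_simps)
    moreover have "butlast s @ [(fst (last s), Suc (snd (last s) - 1))] = s"
      using False ne by (intro butlast_last_pair) simp_all
    ultimately show ?thesis
      using False ne by (simp add: a_def in_trans_def trans_target_def trans_labels_def set_queue_simps)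
  qed
  show "trans_rate (fst a) (snd a) = lam"
    using len ne K_pos by (simp add: a_def trans_rate_def set_queue_simps)
qed

text \<open>When a customer leaves a full system with a nonempty queue, the first waiting customer takes
  over the freed server and becomes the last of the busy list. So the predecessors of a full state s
  by departures put the server of the last customer of s back at some position j, with one more
  customer waiting.\<close>
lemma valid_state_insert_full:
  assumes v: "valid_state K s" and len: "length s = K" and j: "j < K"
  defines "c \<equiv> take j (butlast s) @ (fst (last s), 0) # drop j (butlast s)"
  shows "valid_state K (set_queue c n)"
    and "map fst (set_queue c n) = take j (map fst (butlast s)) @ fst (last s) # drop j (map fst (butlast s))"
proof -
  have ne: "s \<noteq> []"
    using len K_pos by auto
  have fst_s: "map fst s = map fst (butlast s) @ [fst (last s)]"
    using ne by (rule map_butlast_last)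
  have c: "c \<noteq> []" "length c = K"
    using j len unfolding c_def by auto
  have "map fst (set_queue c n) = map fst c"
    by (rule set_queue_simps(1)[OF c(1)])
  also have "\<dots> = take j (map fst (butlast s)) @ fst (last s) # drop j (map fst (butlast s))"
    unfolding c_def by (simp only: map_insert_at fst_conv)
  finally show fst_c: "map fst (set_queue c n) = take j (map fst (butlast s)) @ fst (last s) # drop j (map fst (butlast s))" .
  have "no_waiting c"
    using v unfolding c_def by (intro no_waiting_insert_at) (simp add: valid_state_iff)
  then have "no_waiting (butlast (set_queue c n))"
    using set_queue_simps(4)[OF c(1)] no_waiting_butlast by simp
  moreover have "distinct (map fst (set_queue c n))"
    using v fst_s unfolding fst_c by (intro distinct_insert_at) (simp add: valid_state_def)
  moreover have "set (map fst (set_queue c n)) \<subseteq> {..<K}"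
    using v fst_s unfolding fst_c set_insert_at by (auto simp: valid_state_def)
  ultimately show "valid_state K (set_queue c n)"
    using c by (simp add: valid_state_iff set_queue_simps)
qed

lemma departure_into_full:
  assumes v: "valid_state K s" and len: "length s = K" and j: "j < K"
  defines "c \<equiv> take j (butlast s) @ (fst (last s), 0) # drop j (butlast s)"
  shows "(set_queue c (Suc (snd (last s))), Inr j) \<in> in_trans s"
    and "trans_rate (set_queue c (Suc (snd (last s)))) (Inr j) = mu (fst (last s))"
proof -
  let ?s = "set_queue c (Suc (snd (last s)))"
  have ne: "s \<noteq> []"
    using len K_pos by auto
  have c: "c \<noteq> []" "length c = K" "no_waiting c"
    using j len v unfolding c_def by (auto simp: valid_state_iff intro!: no_waiting_insert_at)
  have "fst (?s ! j) = map fst ?s ! j"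
    using c j by (simp add: set_queue_simps(2)[OF c(1)])
  also have "\<dots> = fst (last s)"
    using valid_state_insert_full(2)[OF v len j] j len by (simp add: c_def nth_append)
  finally have fst_j: "fst (?s ! j) = fst (last s)" .
  have "snd (last c) = 0"
    using c last_in_set[OF c(1)] unfolding no_waiting_def by blast
  then have "set_queue ?s 0 = c"
    using c by (simp add: set_queue_def butlast_last_pair)
  then have "depart K ?s j = take j c @ drop (Suc j) c @ [(fst (last s), snd (last s))]"
    using c by (simp add: depart_with_queue set_queue_simps fst_j)
  also have "\<dots> = s"
    using j len ne by (simp add: c_def) (metis append_assoc append_butlast_last_id append_take_drop_id)
  finally have "trans_target ?s (Inr j) = s"
    by (simp add: trans_target_def)
  moreover have "valid_state K ?s"
    using valid_state_insert_full(1)[OF v len j] by (simp add: c_def)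
  moreover have "Inr j \<in> set (trans_labels ?s)"
    using c j by (simp add: trans_labels_def set_queue_simps)
  ultimately show "(?s, Inr j) \<in> in_trans s"
    by (simp add: in_trans_def)
  show "trans_rate ?s (Inr j) = mu (fst (last s))"
    by (simp add: trans_rate_def fst_j)
qed

lemma departure_without_queue_inv:
  assumes v: "valid_state K s'" and j: "j < length s'" and no_queue: "\<not> (length s' = K \<and> 0 < snd (last s'))"
    and s: "depart K s' j = s"
  shows "length s < K" and "j \<le> length s" and "fst (s' ! j) < K" and "fst (s' ! j) \<notin> set (map fst s)"
    and "s' = take j s @ (fst (s' ! j), 0) # drop j s"
proof -
  have s_eq: "s = take j s' @ drop (Suc j) s'"
    using depart_without_queue[OF no_queue] s by simp
  show "length s < K" "j \<le> length s"
    using s_eq j valid_state_length_le[OF v] by auto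
  have "no_waiting s'"
    using v no_queue valid_state_length_le[OF v] by (intro valid_state_no_waiting) auto
  then obtain x where x: "s' ! j = (x, 0)"
    using j unfolding no_waiting_def by (metis nth_mem prod.collapse)
  have "s' = take j s' @ s' ! j # drop (Suc j) s'"
    by (rule id_take_nth_drop[OF j])
  also have "\<dots> = take j s @ (fst (s' ! j), 0) # drop j s"
    using s_eq j x by simp
  finally show "s' = take j s @ (fst (s' ! j), 0) # drop j s" .
  have "distinct (map fst s')" "set (map fst s') \<subseteq> {..<K}"
    using v by (simp_all add: valid_state_def)
  moreover have "map fst s' = take j (map fst s') @ fst (s' ! j) # drop (Suc j) (map fst s')"
    using id_take_nth_drop[of j "map fst s'"] j by simp
  ultimately show "fst (s' ! j) < K" "fst (s' ! j) \<notin> set (map fst s)"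
    using s_eq j by (auto simp: take_map drop_map dest: nth_mem)
qed

lemma departure_with_queue_inv:
  assumes v: "valid_state K s'" and j: "j < length s'" and full: "length s' = K" and queue: "0 < snd (last s')"
    and s: "depart K s' j = s"
  shows "length s = K"
    and "s' = set_queue (take j (butlast s) @ (fst (last s), 0) # drop j (butlast s)) (Suc (snd (last s)))"
proof -
  define s0 where "s0 = set_queue s' 0"
  have ne: "s' \<noteq> []"
    using full K_pos by auto
  have s_eq: "s = (take j s0 @ drop (Suc j) s0) @ [(fst (s' ! j), snd (last s') - 1)]"
    using depart_with_queue[OF full queue] s by (simp add: s0_def)
  have len0: "length s0 = K"
    using ne full by (simp add: s0_def set_queue_simps)
  then show "length s = K"
    using s_eq j full K_pos by simp
  have butlast_s: "butlast s = take j s0 @ drop (Suc j) s0" and last_s: "last s = (fst (s' ! j), snd (last s') - 1)"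
    unfolding s_eq by (rule butlast_snoc, rule last_snoc)
  have "no_waiting s0"
    using v ne by (auto simp: valid_state_iff set_queue_def no_waiting_def s0_def)
  moreover have "fst (s0 ! j) = fst (s' ! j)"
    using j ne by (metis nth_map len0 full set_queue_simps(1) s0_def)
  ultimately have s0_j: "s0 ! j = (fst (s' ! j), 0)"
    using j full len0 unfolding no_waiting_def by (metis nth_mem prod.collapse)
  have "take j s0 @ s0 ! j # drop (Suc j) s0 = s0"
    using j full len0 by (simp add: id_take_nth_drop[symmetric])
  moreover have "take j (butlast s) = take j s0" "drop j (butlast s) = drop (Suc j) s0"
    using j full len0 unfolding butlast_s by simp_all
  ultimately have "take j (butlast s) @ (fst (last s), 0) # drop j (butlast s) = s0"
    by (simp only: last_s fst_conv s0_j)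
  moreover have "set_queue s0 (Suc (snd (last s))) = s'"
    using last_s queue ne by (simp add: set_queue_def s0_def)
  ultimately show "s' = set_queue (take j (butlast s) @ (fst (last s), 0) # drop j (butlast s)) (Suc (snd (last s)))"
    by simp
qed

lemma arrival_inv:
  assumes v: "valid_state K s'" and l: "Inl t \<in> set (trans_labels s')" and s: "trans_target s' (Inl t) = s"
  obtains "length s' < K" "s \<noteq> []" "s' = butlast s" "t = fst (last s)" "snd (last s) = 0"
  | "length s' = K" "t = 0" "length s = K" "0 < snd (last s)" "s' = set_queue s (snd (last s) - 1)"
proof (cases "length s' < K")
  case True
  then show ?thesis
    using s by (intro that(1)) (auto simp: trans_target_def)
next
  case False
  then have full: "length s' = K"
    using valid_state_length_le[OF v] by simp
  then have "s' \<noteq> []"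
    using K_pos by auto
  moreover have s_eq: "s = butlast s' @ [(fst (last s'), Suc (snd (last s')))]"
    using s False by (simp add: trans_target_def)
  moreover have "t = 0"
    using l False by (auto simp: trans_labels_def)
  ultimately show ?thesis
    using full K_pos by (intro that(2)) (simp_all add: set_queue_def)
qed

section \<open>Global balance of the product-form weights\<close>

definition weight_ext :: "qstate \<Rightarrow> real" where
  "weight_ext s = (if valid_state K s then weight lam mu K s else 0)"

lemma weight_eq:
  "weight lam mu K s =
    (if length s < K then lam ^ length s * fact (K - length s) / (fact K * prefix_sums_prod mu (map fst s))
     else lam ^ K / (fact K * prefix_sums_prod mu (map fst s)) * (lam / total_rate) ^ snd (last s))"
proof -
  have "(\<Prod>j<length s. \<Sum>l\<le>j. mu (fst (s ! l))) = prefix_sums_prod mu (map fst s)"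
    unfolding prefix_sums_prod_def length_map by (intro prod.cong sum.cong refl) auto
  then show ?thesis
    unfolding weight_def Let_def by simp
qed
lemma prefix_sums_prod_butlast:
  assumes "s \<noteq> []"
  shows "prefix_sums_prod mu (map fst s) = prefix_sums_prod mu (map fst (butlast s)) * busy_rate s"
proof -
  have "busy_rate s = sum_list (map mu (map fst s))"
    unfolding busy_rate_def by (simp add: sum_list_sum_nth atLeast0LessThan)
  then show ?thesis
    using map_butlast_last[OF assms, of fst] prefix_sums_prod_snoc[of mu "map fst (butlast s)" "fst (last s)"]
    by simp
qed

lemma inflow_eq_sum_in_trans:
  assumes v: "valid_state K s" and fin: "finite (in_trans s)"
  shows "(\<Sum>\<^sub>\<infinity>s'\<in>UNIV - {s}. weight_ext s' * rate lam mu K s' s)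
    = (\<Sum>(s', l)\<in>in_trans s. weight_ext s' * trans_rate s' l)"
proof -
  let ?B = "fst ` in_trans s" and ?L = "\<lambda>s'. {l \<in> set (trans_labels s'). trans_target s' l = s}"
  have "weight_ext s' * rate lam mu K s' s = 0" if "s' \<notin> ?B" for s'
  proof (cases "valid_state K s'")
    case True
    then have "?L s' = {}"
      using that by (force simp: in_trans_def)
    then have "rate lam mu K s' s = 0"
      by (simp only: rate_eq sum.empty)
    then show ?thesis
      by simp
  next
    case False
    then show ?thesis
      by (simp add: weight_ext_def)
  qed
  moreover have "?B \<subseteq> UNIV - {s}"
    using trans_target_neq by (force simp: in_trans_def)
  ultimately have "(\<Sum>\<^sub>\<infinity>s'\<in>UNIV - {s}. weight_ext s' * rate lam mu K s' s) = (\<Sum>s'\<in>?B. weight_ext s' * rate lam mu K s' s)"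
    using fin by (intro infsumI has_sum_finite_neutralI) auto
  also have "\<dots> = (\<Sum>s'\<in>?B. \<Sum>l\<in>?L s'. weight_ext s' * trans_rate s' l)"
    by (simp add: rate_eq sum_distrib_left)
  also have "\<dots> = (\<Sum>(s', l)\<in>Sigma ?B ?L. weight_ext s' * trans_rate s' l)"
    using fin by (subst sum.Sigma) auto
  also have "Sigma ?B ?L = in_trans s"
    by (force simp: in_trans_def image_iff)
  finally show ?thesis .
qed

lemma prefix_sums_prod_mu_pos: "set xs \<subseteq> {..<K} \<Longrightarrow> prefix_sums_prod mu xs > 0"
  by (rule prefix_sums_prod_pos) (auto intro: mu_pos)

lemma in_trans_partial:
  assumes v: "valid_state K s" and len: "length s < K"
  shows "in_trans s = (if s = [] then {} else {(butlast s, Inl (fst (last s)))})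
    \<union> (\<lambda>(x, j). (take j s @ (x, 0) # drop j s, Inr j)) ` (({..<K} - set (map fst s)) \<times> {..length s})"
    (is "_ = ?A \<union> ?g ` ?I")
proof (intro equalityI subsetI)
  fix p assume "p \<in> in_trans s"
  then obtain s' l where p: "p = (s', l)" and vs: "valid_state K s'"
    and l: "l \<in> set (trans_labels s')" and s: "trans_target s' l = s"
    by (auto simp: in_trans_def)
  from l show "p \<in> ?A \<union> ?g ` ?I"
  proof (cases rule: trans_labelsE)
    case (arrival t)
    from arrival_inv[OF vs l[unfolded arrival(1)] s[unfolded arrival(1)]] show ?thesis
    proof cases
      case 1
      then show ?thesis
        using p arrival(1) by simp
    next
      case 2
      then show ?thesis
        using len by simp
    qed
  next
    case (departure j)
    have dep: "depart K s' j = s"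
      using s departure by (simp add: trans_target_def)
    have "\<not> (length s' = K \<and> 0 < snd (last s'))"
      using departure_with_queue_inv(1)[OF vs departure(2) _ _ dep] len by auto
    note inv = departure_without_queue_inv[OF vs departure(2) this dep]
    define x where "x = fst (s' ! j)"
    have "(x, j) \<in> ?I"
      using inv(2-4) by (simp add: x_def)
    moreover have s': "s' = take j s @ (x, 0) # drop j s"
      unfolding x_def by (rule inv(5))
    ultimately show ?thesis
      unfolding p departure(1) s' by (intro UnI2 image_eqI[of _ _ "(x, j)"]) simp_all
  qed
next
  fix p assume "p \<in> ?A \<union> ?g ` ?I"
  then show "p \<in> in_trans s"
  proof
    assume "p \<in> ?A"
    then show ?thesis
      using arrival_into_partial(1)[OF v len] by (simp split: if_splits)
  next
    assume "p \<in> ?g ` ?I"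
    then obtain x j where x: "x < K" "x \<notin> set (map fst s)" and j: "j \<le> length s" and "p = ?g (x, j)"
      by auto
    then show ?thesis
      using departure_into_partial(1)[OF v len x j] by simp
  qed
qed

lemma weight_ext_insert_partial:
  assumes v: "valid_state K s" and len: "length s < K"
    and x: "x < K" "x \<notin> set (map fst s)" and j: "j \<le> length s"
  shows "weight_ext (take j s @ (x, 0) # drop j s) = lam ^ Suc (length s) * fact (K - Suc (length s))
      / (fact K * prefix_sums_prod mu (take j (map fst s) @ x # drop j (map fst s)))"
proof -
  let ?s = "take j s @ (x, 0) # drop j s"
  have vs: "valid_state K ?s"
    using departure_into_partial(1)[OF v len x j] by (simp add: in_trans_def)
  have "no_waiting ?s"
    using v len by (intro no_waiting_insert_at valid_state_no_waiting) auto
  then have "snd (last ?s) = 0"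
    unfolding no_waiting_def by (metis last_in_set Nil_is_append_conv list.distinct(1))
  moreover have "length ?s = Suc (length s)" "map fst ?s = take j (map fst s) @ x # drop j (map fst s)"
    using j by (simp_all only: length_append length_take length_Cons length_drop map_insert_at fst_conv)
  moreover have "Suc (length s) < K \<or> K - Suc (length s) = 0 \<and> lam ^ K = lam ^ Suc (length s)"
    using len by (metis Suc_leI diff_is_0_eq le_antisym not_less)
  ultimately show ?thesis
    using vs by (elim disjE) (simp_all add: weight_ext_def weight_eq)
qed

text \<open>Summing over the position j of the departed customer first, the telescoping identity leaves
  one term per idle server.\<close>
lemma departure_inflow_partial:
  assumes v: "valid_state K s" and len: "length s < K"
  shows "(\<Sum>(x, j)\<in>({..<K} - set (map fst s)) \<times> {..length s}. weight_ext (take j s @ (x, 0) # drop j s) * mu x)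
    = lam * weight_ext s"
proof -
  let ?u = "map fst s" and ?i = "length s"
  define X where "X = {..<K} - set ?u"
  define c where "c = lam ^ Suc ?i * fact (K - Suc ?i) / (fact K :: real)"
  have u: "set ?u \<subseteq> {..<K}"
    using v by (simp add: valid_state_def)
  have "(\<Sum>(x, j)\<in>X \<times> {..?i}. weight_ext (take j s @ (x, 0) # drop j s) * mu x)
      = (\<Sum>x\<in>X. c * (\<Sum>j\<le>?i. mu x / prefix_sums_prod mu (take j ?u @ x # drop j ?u)))"
    unfolding sum.cartesian_product[symmetric] sum_distrib_left
  proof (intro sum.cong refl)
    fix x j assume "x \<in> X" "j \<in> {..?i}"
    then have "x < K" "x \<notin> set ?u" "j \<le> ?i"
      by (auto simp: X_def)
    from weight_ext_insert_partial[OF v len this] show "weight_ext (take j s @ (x, 0) # drop j s) * mu x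
        = c * (mu x / prefix_sums_prod mu (take j ?u @ x # drop j ?u))"
      by (simp add: c_def)
  qed
  also have "\<dots> = (\<Sum>x\<in>X. c / prefix_sums_prod mu ?u)"
  proof (intro sum.cong refl)
    fix x assume "x \<in> X"
    then have "mu x > 0"
      by (simp add: X_def mu_pos)
    from sum_insert_at_prefix_sums_prod[of ?u mu x, OF _ this] u mu_pos
    show "c * (\<Sum>j\<le>?i. mu x / prefix_sums_prod mu (take j ?u @ x # drop j ?u)) = c / prefix_sums_prod mu ?u"
      by (auto simp: subset_iff)
  qed
  also have "\<dots> = real (K - ?i) * c / prefix_sums_prod mu ?u"
  proof -
    have "card X = K - ?i"
      using u distinct_card[of ?u] v by (simp add: X_def card_Diff_subset valid_state_def)
    then show ?thesis by simp
  qed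
  also have "\<dots> = lam * weight_ext s"
  proof -
    have "(fact (K - ?i) :: real) = real (K - ?i) * fact (K - Suc ?i)"
      using len by (metis Suc_diff_Suc fact_Suc of_nat_Suc)
    then show ?thesis
      using v len by (simp add: weight_ext_def weight_eq c_def)
  qed
  finally show ?thesis
    by (simp add: X_def)
qed

lemma arrival_inflow_partial:
  assumes v: "valid_state K s" and len: "length s < K" and ne: "s \<noteq> []"
  shows "weight_ext (butlast s) * (lam / real (K - (length s - 1))) = weight_ext s * busy_rate s"
proof -
  let ?i = "length s" and ?b = "map fst (butlast s)"
  have vb: "valid_state K (butlast s)"
    using arrival_into_partial(1)[OF v len ne] by (simp add: in_trans_def)
  have u: "set (map fst s) \<subseteq> {..<K}"
    using v by (simp add: valid_state_def)
  then have Pb: "prefix_sums_prod mu ?b > 0"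
    by (intro prefix_sums_prod_mu_pos) (auto simp: map_butlast[symmetric] dest: in_set_butlastD)
  moreover have "prefix_sums_prod mu ?b * busy_rate s > 0"
    using prefix_sums_prod_mu_pos[OF u] prefix_sums_prod_butlast[OF ne] by simp
  ultimately have pos: "prefix_sums_prod mu ?b > 0" "busy_rate s > 0"
    by (simp_all add: zero_less_mult_iff)
  have "?i \<ge> 1"
    using ne by (cases s) auto
  then have K: "K - (?i - 1) = Suc (K - ?i)" and i: "?i = Suc (?i - 1)"
    using len by arith+
  have "weight_ext (butlast s) = lam ^ (?i - 1) * fact (K - (?i - 1)) / (fact K * prefix_sums_prod mu ?b)"
    using vb len less_imp_diff_less[OF len] by (simp add: weight_ext_def weight_eq)
  also have "fact (K - (?i - 1)) = real (Suc (K - ?i)) * (fact (K - ?i) :: real)"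
    unfolding K by (rule fact_Suc)
  finally have wb: "weight_ext (butlast s)
      = lam ^ (?i - 1) * (real (Suc (K - ?i)) * fact (K - ?i)) / (fact K * prefix_sums_prod mu ?b)" .
  have ws: "weight_ext s = lam * lam ^ (?i - 1) * fact (K - ?i) / (fact K * (prefix_sums_prod mu ?b * busy_rate s))"
    using v len power_Suc[of lam "?i - 1", folded i] by (simp add: weight_ext_def weight_eq prefix_sums_prod_butlast[OF ne])
  show ?thesis
    unfolding wb ws K using pos by (simp add: field_simps del: of_nat_Suc)
qed

lemma inflow_partial:
  assumes v: "valid_state K s" and len: "length s < K"
  shows "finite (in_trans s)"
    and "(\<Sum>(s', l)\<in>in_trans s. weight_ext s' * trans_rate s' l) = weight_ext s * exit_rate s"
proof -
  let ?A = "if s = [] then {} else {(butlast s, Inl (fst (last s)))}"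
  let ?g = "\<lambda>(x, j). (take j s @ (x, 0) # drop j s, Inr j)"
  let ?I = "({..<K} - set (map fst s)) \<times> {..length s}"
  let ?f = "\<lambda>(s', l). weight_ext s' * trans_rate s' l"
  have inj: "inj_on ?g ?I"
    by (rule inj_onI) (auto simp: case_prod_beta prod_eq_iff)
  have disjoint: "?A \<inter> ?g ` ?I = {}"
    by auto
  show "finite (in_trans s)"
    unfolding in_trans_partial[OF v len] by simp
  have "(\<Sum>p\<in>in_trans s. ?f p) = (\<Sum>p\<in>?A. ?f p) + (\<Sum>p\<in>?g ` ?I. ?f p)"
    unfolding in_trans_partial[OF v len] by (rule sum.union_disjoint[OF _ _ disjoint]) simp_all
  also have "(\<Sum>p\<in>?g ` ?I. ?f p) = (\<Sum>q\<in>?I. ?f (?g q))"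
    by (rule sum.reindex_cong[OF inj refl refl])
  also have "(\<Sum>p\<in>?A. ?f p) = weight_ext s * busy_rate s"
    using arrival_inflow_partial[OF v len] arrival_into_partial(2)[OF v len] by (simp add: busy_rate_def)
  also have "(\<Sum>q\<in>?I. ?f (?g q)) = (\<Sum>(x, j)\<in>?I. weight_ext (take j s @ (x, 0) # drop j s) * mu x)"
    using departure_into_partial(2)[OF v len] by (intro sum.cong refl) auto
  also have "\<dots> = lam * weight_ext s"
    by (rule departure_inflow_partial[OF v len])
  finally show "(\<Sum>p\<in>in_trans s. ?f p) = weight_ext s * exit_rate s"
    by (simp add: exit_rate_eq[OF v] algebra_simps)
qed

lemma in_trans_full:
  assumes v: "valid_state K s" and len: "length s = K"
  shows "in_trans s = insert
      (if snd (last s) = 0 then (butlast s, Inl (fst (last s))) else (set_queue s (snd (last s) - 1), Inl 0))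
      ((\<lambda>j. (set_queue (take j (butlast s) @ (fst (last s), 0) # drop j (butlast s)) (Suc (snd (last s))), Inr j))
        ` {..<K})"
    (is "_ = insert ?a (?g ` _)")
proof (intro equalityI subsetI)
  fix p assume "p \<in> in_trans s"
  then obtain s' l where p: "p = (s', l)" and vs: "valid_state K s'"
    and l: "l \<in> set (trans_labels s')" and tg: "trans_target s' l = s"
    by (auto simp: in_trans_def)
  from l show "p \<in> insert ?a (?g ` {..<K})"
  proof (cases rule: trans_labelsE)
    case (arrival t)
    from arrival_inv[OF vs l[unfolded arrival(1)] tg[unfolded arrival(1)]] have "p = ?a"
      by cases (simp_all add: p arrival(1))
    then show ?thesis by simp
  next
    case (departure j)
    note j = departure
    have dj: "depart K s' j = s"
      using tg j by (simp add: trans_target_def)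
    have queue: "length s' = K \<and> 0 < snd (last s')"
    proof (rule ccontr)
      assume "\<not> (length s' = K \<and> 0 < snd (last s'))"
      with len show False
        using departure_without_queue_inv(1)[OF vs j(2) _ dj] by simp
    qed
    then have "s' = set_queue (take j (butlast s) @ (fst (last s), 0) # drop j (butlast s)) (Suc (snd (last s)))"
      using departure_with_queue_inv(2)[OF vs j(2) _ _ dj] by blast
    moreover have "j < K"
      using j(2) queue by simp
    ultimately show ?thesis
      unfolding p j(1) by (intro insertI2 image_eqI[of _ _ j]) simp_all
  qed
next
  fix p assume "p \<in> insert ?a (?g ` {..<K})"
  then show "p \<in> in_trans s"
  proof
    assume "p = ?a"
    then show ?thesis
      using arrival_into_full(1)[OF v len] by simp
  next
    assume "p \<in> ?g ` {..<K}"
    then obtain j where "j < K" and "p = ?g j"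
      by auto
    then show ?thesis
      using departure_into_full(1)[OF v len \<open>j < K\<close>] by simp
  qed
qed

text \<open>As in the partial case; here the telescoping sum runs over the position j at which the server
  of the last customer of s is re-inserted.\<close>
lemma departure_inflow_full:
  assumes v: "valid_state K s" and len: "length s = K"
  shows "(\<Sum>j<K. weight_ext (set_queue (take j (butlast s) @ (fst (last s), 0) # drop j (butlast s)) (Suc (snd (last s))))
      * mu (fst (last s))) = lam * weight_ext s"
proof -
  let ?b = "map fst (butlast s)" and ?x = "fst (last s)" and ?n = "snd (last s)"
  let ?c = "\<lambda>j. set_queue (take j (butlast s) @ (?x, 0) # drop j (butlast s)) (Suc ?n)"
  define q where "q = lam / total_rate"
  have ne: "s \<noteq> []"
    using len K_pos by auto
  have u: "set (map fst s) \<subseteq> {..<K}"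
    using v by (simp add: valid_state_def)
  then have b: "set ?b \<subseteq> {..<K}" and x: "?x < K"
    using map_butlast_last[OF ne, of fst] by auto
  have "prefix_sums_prod mu (map fst s) = prefix_sums_prod mu ?b * total_rate"
    using prefix_sums_prod_butlast[OF ne] busy_rate_full[OF v len] by (simp add: map_butlast)
  then have ws: "weight_ext s = lam ^ K / (fact K * (prefix_sums_prod mu ?b * total_rate)) * q ^ ?n"
    using v len by (simp add: weight_ext_def weight_eq q_def)
  have wc: "weight_ext (?c j) * mu ?x
      = lam ^ K * q ^ Suc ?n / fact K * (mu ?x / prefix_sums_prod mu (take j ?b @ ?x # drop j ?b))"
    if j: "j < K" for j
  proof -
    have c: "valid_state K (?c j)" "map fst (?c j) = take j ?b @ ?x # drop j ?b"
      using valid_state_insert_full[OF v len j] by (simp_all add: map_butlast)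
    moreover have "length (?c j) = K" "snd (last (?c j)) = Suc ?n"
      using j len by (simp_all add: set_queue_simps)
    ultimately show ?thesis
      by (simp add: weight_ext_def weight_eq q_def)
  qed
  have "(\<Sum>j<K. weight_ext (?c j) * mu ?x)
      = (\<Sum>j<K. lam ^ K * q ^ Suc ?n / fact K * (mu ?x / prefix_sums_prod mu (take j ?b @ ?x # drop j ?b)))"
    by (rule sum.cong[OF refl]) (simp add: wc)
  also have "\<dots> = lam ^ K * q ^ Suc ?n / fact K * (\<Sum>j\<le>length ?b. mu ?x / prefix_sums_prod mu (take j ?b @ ?x # drop j ?b))"
  proof -
    have "{..<K} = {..length ?b}"
      using len K_pos by auto
    then show ?thesis
      by (simp only: sum_distrib_left)
  qed
  also have "\<dots> = lam ^ K * q ^ Suc ?n / fact K / prefix_sums_prod mu ?b"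
    using sum_insert_at_prefix_sums_prod[of ?b mu ?x] b x mu_pos by (auto simp: subset_iff)
  also have "\<dots> = lam * weight_ext s"
    using total_rate_pos by (simp add: ws q_def field_simps)
  finally show ?thesis .
qed

lemma arrival_inflow_full:
  assumes v: "valid_state K s" and len: "length s = K"
  shows "weight_ext (if snd (last s) = 0 then butlast s else set_queue s (snd (last s) - 1)) * lam
    = weight_ext s * total_rate"
proof -
  let ?b = "map fst (butlast s)" and ?n = "snd (last s)"
  define q where "q = lam / total_rate"
  have ne: "s \<noteq> []"
    using len K_pos by auto
  have u: "set (map fst s) \<subseteq> {..<K}"
    using v by (simp add: valid_state_def)
  have P: "prefix_sums_prod mu (map fst s) = prefix_sums_prod mu ?b * total_rate"
    using prefix_sums_prod_butlast[OF ne] busy_rate_full[OF v len] by (simp add: map_butlast)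
  have Pb: "prefix_sums_prod mu ?b > 0"
    using u map_butlast_last[OF ne, of fst] by (intro prefix_sums_prod_mu_pos) auto
  define C where "C = lam ^ K / (fact K * (prefix_sums_prod mu ?b * total_rate))"
  have ws: "weight_ext s = C * q ^ ?n"
    using v len P by (simp add: weight_ext_def weight_eq q_def C_def)
  have qM: "q * total_rate = lam"
    using total_rate_pos by (simp add: q_def)
  show ?thesis
  proof (cases "?n = 0")
    case True
    have "valid_state K (butlast s)"
      using arrival_into_full(1)[OF v len] True by (simp add: in_trans_def)
    moreover have "length (butlast s) = K - 1" "K - (K - 1) = 1"
      using len K_pos by simp_all
    ultimately have "weight_ext (butlast s) = lam ^ (K - 1) / (fact K * prefix_sums_prod mu ?b)"
      using K_pos by (simp add: weight_ext_def weight_eq map_butlast)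
    moreover have "lam ^ K = lam ^ (K - 1) * lam"
      using K_pos power_minus_mult[of K lam] by simp
    ultimately show ?thesis
      using True Pb total_rate_pos by (simp add: ws C_def field_simps)
  next
    case False
    have "valid_state K (set_queue s (?n - 1))"
      using arrival_into_full(1)[OF v len] False by (simp add: in_trans_def)
    then have w: "weight_ext (set_queue s (?n - 1)) = C * q ^ (?n - 1)"
      using ne len P by (simp add: weight_ext_def weight_eq set_queue_simps q_def C_def)
    have "weight_ext (set_queue s (?n - 1)) * lam = C * q ^ (?n - 1) * (q * total_rate)"
      by (simp only: w qM)
    also have "\<dots> = weight_ext s * total_rate"
      using False power_minus_mult[of ?n q] by (simp add: ws mult_ac)
    finally show ?thesis
      using False by simp
  qed
qed

lemma inflow_full:
  assumes v: "valid_state K s" and len: "length s = K"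
  shows "finite (in_trans s)"
    and "(\<Sum>(s', l)\<in>in_trans s. weight_ext s' * trans_rate s' l) = weight_ext s * exit_rate s"
proof -
  let ?x = "fst (last s)" and ?n = "snd (last s)"
  let ?a = "if ?n = 0 then (butlast s, Inl ?x) else (set_queue s (?n - 1), Inl 0)"
  let ?g = "\<lambda>j. (set_queue (take j (butlast s) @ (?x, 0) # drop j (butlast s)) (Suc ?n), Inr j)"
  let ?f = "\<lambda>(s', l). weight_ext s' * trans_rate s' l"
  show "finite (in_trans s)"
    unfolding in_trans_full[OF v len] by simp
  have "?a \<notin> ?g ` {..<K}"
    by auto
  then have "(\<Sum>p\<in>in_trans s. ?f p) = ?f ?a + (\<Sum>p\<in>?g ` {..<K}. ?f p)"
    unfolding in_trans_full[OF v len] by (intro sum.insert) simp_all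
  also have "(\<Sum>p\<in>?g ` {..<K}. ?f p) = (\<Sum>j<K. ?f (?g j))"
    by (rule sum.reindex_cong[OF _ refl refl]) (simp add: inj_on_def)
  also have "?f ?a = weight_ext s * total_rate"
    using arrival_inflow_full[OF v len] arrival_into_full(2)[OF v len]
    by (cases "?n = 0") simp_all
  also have "(\<Sum>j<K. ?f (?g j)) = lam * weight_ext s"
    using departure_inflow_full[OF v len] departure_into_full(2)[OF v len] by simp
  finally show "(\<Sum>p\<in>in_trans s. ?f p) = weight_ext s * exit_rate s"
    by (simp add: exit_rate_eq[OF v] busy_rate_full[OF v len] algebra_simps)
qed

lemma inflow_weight_eq:
  assumes "valid_state K s"
  shows "(\<Sum>\<^sub>\<infinity>s'\<in>UNIV - {s}. weight_ext s' * rate lam mu K s' s) = weight_ext s * exit_rate s"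
  using inflow_eq_sum_in_trans[OF assms] inflow_partial[OF assms] inflow_full[OF assms]
    valid_state_length_le[OF assms] by (cases "length s < K") auto

section \<open>The stationary distribution\<close>

lemma weight_ext_nonneg: "weight_ext s \<ge> 0"
  using lam_pos total_rate_pos prefix_sums_prod_mu_pos[of "map fst s"]
  by (auto simp: weight_ext_def weight_eq valid_state_def)

lemma weight_ext_Nil: "weight_ext [] = 1"
  using K_pos by (simp add: weight_ext_def weight_eq valid_state_def)

lemma finite_partial_states: "finite {s. valid_state K s \<and> length s < K}"
proof (rule finite_subset)
  show "{s. valid_state K s \<and> length s < K} \<subseteq> {s. set s \<subseteq> {..<K} \<times> {0} \<and> length s \<le> K}"
  proof (intro subsetI CollectI, elim CollectE conjE)
    fix s assume v: "valid_state K s" and len: "length s < K"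
    then have "no_waiting s"
      by (intro valid_state_no_waiting) auto
    moreover have "set (map fst s) \<subseteq> {..<K}"
      using v by (simp add: valid_state_def)
    ultimately show "set s \<subseteq> {..<K} \<times> {0} \<and> length s \<le> K"
      using len by (auto simp: no_waiting_def)
  qed
qed (rule finite_lists_length_le, simp)

definition full_state :: "nat list \<Rightarrow> nat \<Rightarrow> qstate" where
  "full_state u n = set_queue (map (\<lambda>t. (t, 0)) u) n"

lemma full_state_simps:
  assumes "u \<noteq> []"
  shows "map fst (full_state u n) = u" "snd (last (full_state u n)) = n" "length (full_state u n) = length u"
  using set_queue_simps[of "map (\<lambda>t. (t, 0::nat)) u" n] assms by (simp_all add: full_state_def comp_def)

lemma valid_full_state:
  assumes "distinct u" "set u \<subseteq> {..<K}" "length u = K"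
  shows "valid_state K (full_state u n)"
proof -
  have "u \<noteq> []"
    using assms(3) K_pos by auto
  moreover have "no_waiting (butlast (full_state u n))"
    using \<open>u \<noteq> []\<close> by (auto simp: full_state_def set_queue_simps no_waiting_def dest: in_set_butlastD)
  ultimately show ?thesis
    using assms by (simp add: valid_state_iff full_state_simps)
qed

lemma full_state_eq:
  assumes v: "valid_state K s" and len: "length s = K"
  shows "full_state (map fst s) (snd (last s)) = s"
proof -
  have ne: "s \<noteq> []"
    using len K_pos by auto
  have "no_waiting (butlast s)"
    using v by (simp add: valid_state_iff)
  then have "map (\<lambda>p. (fst p, 0)) (butlast s) = butlast s"
    by (intro map_idI) (auto simp: no_waiting_def prod_eq_iff)
  then show ?thesis
    using ne by (simp add: full_state_def set_queue_def map_butlast[symmetric] last_map comp_def)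
qed

lemma full_states_summable: "weight_ext summable_on {s. valid_state K s \<and> length s = K}"
proof -
  define q where "q = lam / total_rate"
  define Perms where "Perms = {u. distinct u \<and> set u \<subseteq> {..<K} \<and> length u = K}"
  define C where "C u = lam ^ K / (fact K * prefix_sums_prod mu u)" for u
  have q: "0 \<le> q" "q < 1"
    using lam_pos total_rate_pos stable by (simp_all add: q_def)
  have Perms: "finite Perms"
    unfolding Perms_def by (rule finite_subset[OF _ finite_lists_length_eq[of "{..<K}" K]]) auto
  have nonempty: "u \<noteq> []" if "u \<in> Perms" for u
    using that K_pos by (auto simp: Perms_def)
  then have weight: "weight_ext (full_state u n) = C u * q ^ n" if "u \<in> Perms" for u n
    using that valid_full_state[of u n] by (simp add: Perms_def weight_ext_def weight_eq full_state_simps C_def q_def)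
  have C: "C u \<ge> 0" if "u \<in> Perms" for u
    using that prefix_sums_prod_mu_pos[of u] lam_pos by (simp add: Perms_def C_def)
  have rows: "((\<lambda>n. weight_ext (full_state u n)) has_sum (C u * (1 / (1 - q)))) UNIV" if "u \<in> Perms" for u
  proof -
    have "(\<lambda>n. C u * q ^ n) sums (C u * (1 / (1 - q)))"
      using q by (intro sums_mult geometric_sums) simp
    then show ?thesis
      using q C[OF that] by (simp add: weight[OF that] sums_nonneg_imp_has_sum)
  qed
  let ?h = "\<lambda>(u, n). full_state u n"
  have "(\<lambda>(u, n). weight_ext (full_state u n)) summable_on Perms \<times> UNIV"
    by (rule summable_on_SigmaI[where g = "\<lambda>u. C u * (1 / (1 - q))"]) (use rows Perms weight_ext_nonneg in auto)
  moreover have "(\<lambda>(u, n). weight_ext (full_state u n)) = weight_ext \<circ> ?h"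
    by (simp add: fun_eq_iff)
  ultimately have "(weight_ext \<circ> ?h) summable_on Perms \<times> UNIV"
    by simp
  moreover have "inj_on ?h (Perms \<times> UNIV)"
  proof (rule inj_onI, clarify)
    fix u n u' n' assume "u \<in> Perms" "u' \<in> Perms" and eq: "full_state u n = full_state u' n'"
    then show "u = u' \<and> n = n'"
      using full_state_simps(1,2)[OF nonempty[of u]] full_state_simps(1,2)[OF nonempty[of u']] by metis
  qed
  moreover have "{s. valid_state K s \<and> length s = K} \<subseteq> ?h ` (Perms \<times> UNIV)"
  proof
    fix s assume "s \<in> {s. valid_state K s \<and> length s = K}"
    then have "valid_state K s" "length s = K"
      by simp_all
    then show "s \<in> ?h ` (Perms \<times> UNIV)"
      using full_state_eq[of s] by (intro image_eqI[of _ _ "(map fst s, snd (last s))"]) (auto simp: Perms_def valid_state_def)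
  qed
  ultimately show ?thesis
    using summable_on_subset summable_on_reindex by blast
qed

lemma weight_ext_summable: "weight_ext summable_on UNIV"
proof -
  let ?partial = "{s. valid_state K s \<and> length s < K}" and ?full = "{s. valid_state K s \<and> length s = K}"
  have "weight_ext summable_on (?partial \<union> ?full)"
    using finite_partial_states full_states_summable by (intro summable_on_union) auto
  moreover have "weight_ext s = 0" if "s \<notin> ?partial \<union> ?full" for s
    using that valid_state_length_le[of K s] by (auto simp: weight_ext_def)
  ultimately show ?thesis
    by (rule summable_on_cong_neutral[THEN iffD1, rotated -1]) auto
qed
lemma infsum_rate_out: "valid_state K s \<Longrightarrow> (\<Sum>\<^sub>\<infinity>s'\<in>UNIV - {s}. rate lam mu K s s') = exit_rate s"
  using infsumI[OF jump_rate_has_sum, of s] infsum_cong_neutral[of "UNIV - {s}" UNIV "rate lam mu K s" "jump_rate s"]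
  by (auto simp: jump_rate_def)

lemma infsum_rate_in: "(\<Sum>\<^sub>\<infinity>s'\<in>UNIV - {s}. f s' * rate lam mu K s' s) = (\<Sum>\<^sub>\<infinity>t. f t * jump_rate t s)"
  by (rule infsum_cong_neutral) (auto simp: jump_rate_def)

lemma summable_times_jump_rate:
  fixes f :: "qstate \<Rightarrow> real"
  assumes f: "f summable_on UNIV" and f0: "\<And>t. \<not> valid_state K t \<Longrightarrow> f t = 0"
  shows "(\<lambda>t. f t * jump_rate t s) summable_on UNIV"
proof (rule abs_summable_summable, rule summable_on_comparison_test)
  show "(\<lambda>t. norm (f t) * (lam + total_rate)) summable_on UNIV"
    using summable_on_iff_abs_summable_on_real[THEN iffD1, OF f] by (rule summable_on_cmult_left)
  show "norm (f t * jump_rate t s) \<le> norm (f t) * (lam + total_rate)" for t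
    using jump_rate_nonneg[of t s] jump_rate_le[of t s] f0[of t]
    by (cases "valid_state K t") (auto simp: abs_mult intro: mult_left_mono)
qed simp

lemma global_balance_weight:
  "valid_state K s \<Longrightarrow> weight_ext s * exit_rate s = (\<Sum>\<^sub>\<infinity>t. weight_ext t * jump_rate t s)"
  using inflow_weight_eq by (simp add: infsum_rate_in)

lemma stationary_balance:
  "stationary lam mu K p \<Longrightarrow> valid_state K s \<Longrightarrow> p s * exit_rate s = (\<Sum>\<^sub>\<infinity>t. p t * jump_rate t s)"
  unfolding stationary_def by (simp add: infsum_rate_out infsum_rate_in)

text \<open>Every nonempty state jumps to a state with fewer customers (the first customer leaves), so the
  zero of d at the empty state spreads to all states.\<close>
lemma balance_solution_eq_0:
  assumes d_summable: "d summable_on UNIV" and d0: "\<And>t. \<not> valid_state K t \<Longrightarrow> d t = 0"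
    and balance: "\<And>s. valid_state K s \<Longrightarrow> d s * exit_rate s = (\<Sum>\<^sub>\<infinity>t. d t * jump_rate t s)"
    and "d [] = 0"
  shows "d s = 0"
proof (induction "customers s" arbitrary: s rule: less_induct)
  case less
  show ?case
  proof (cases "valid_state K s \<and> s \<noteq> []")
    case True
    then have vs: "valid_state K s" and l: "Inr 0 \<in> set (trans_labels s)"
      by (simp_all add: trans_labels_def)
    let ?s1 = "trans_target s (Inr 0)"
    have "customers ?s1 < customers s"
      using customers_depart_less[OF vs] True by (simp add: trans_target_def)
    then have "d ?s1 = 0"
      by (rule less)
    moreover have "s \<in> Collect (valid_state K)"
      using vs by simp
    moreover have "jump_rate s ?s1 > 0"
      using rate_target_pos[OF vs l] trans_target_neq[OF vs l] by (simp add: jump_rate_def)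
    ultimately show ?thesis
      using balance_solution_zero_propagates[where V = "Collect (valid_state K)", OF d_summable _ _ _ _ balance]
        d0 jump_rate_nonneg jump_rate_has_sum exit_rate_le by blast
  next
    case False
    then show ?thesis
      using d0 \<open>d [] = 0\<close> by auto
  qed
qed

lemma stationary_eq_weight:
  assumes st: "stationary lam mu K p"
  shows "p s = p [] * weight_ext s"
proof -
  have p0: "\<And>t. \<not> valid_state K t \<Longrightarrow> p t = 0" and "(p has_sum 1) UNIV"
    using st unfolding stationary_def by blast+
  then have p_summable: "p summable_on UNIV"
    by (auto simp: summable_on_def)
  have w0: "\<And>t. \<not> valid_state K t \<Longrightarrow> weight_ext t = 0"
    by (simp add: weight_ext_def)
  define d where "d t = p t + (- p []) * weight_ext t" for t
  have "d s = 0"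
  proof (rule balance_solution_eq_0)
    show "d summable_on UNIV"
      unfolding d_def by (intro summable_on_add p_summable summable_on_cmult_right weight_ext_summable)
    show "d t = 0" if "\<not> valid_state K t" for t
      using that by (simp add: d_def p0 w0)
    show "d [] = 0"
      by (simp add: d_def weight_ext_Nil)
    fix s assume "valid_state K s"
    have "(\<lambda>t. p t * jump_rate t s) summable_on UNIV" "(\<lambda>t. weight_ext t * jump_rate t s) summable_on UNIV"
      using p0 w0 by (auto intro!: summable_times_jump_rate p_summable weight_ext_summable)
    then have "(\<Sum>\<^sub>\<infinity>t. d t * jump_rate t s)
        = (\<Sum>\<^sub>\<infinity>t. p t * jump_rate t s) + (- p []) * (\<Sum>\<^sub>\<infinity>t. weight_ext t * jump_rate t s)"
      unfolding d_def distrib_right mult.assoc by (simp only: infsum_add summable_on_cmult_right infsum_cmult_right')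
    then show "d s * exit_rate s = (\<Sum>\<^sub>\<infinity>t. d t * jump_rate t s)"
      using \<open>valid_state K s\<close> stationary_balance[OF st] global_balance_weight by (simp add: d_def algebra_simps)
  qed
  then show ?thesis
    by (simp add: d_def)
qed

lemma weight_total_pos: "(\<Sum>\<^sub>\<infinity>t. weight_ext t) > 0"
proof -
  have "(\<Sum>\<^sub>\<infinity>t. weight_ext t) \<noteq> 0"
    using nonneg_infsum_le_0D[OF _ weight_ext_summable weight_ext_nonneg, of "[]"] weight_ext_Nil by auto
  then show ?thesis
    using infsum_nonneg[of UNIV weight_ext] weight_ext_nonneg by fastforce
qed

lemma stationary_normalized_weight: "stationary lam mu K (\<lambda>s. weight_ext s / (\<Sum>\<^sub>\<infinity>t. weight_ext t))"
  unfolding stationary_def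
proof (intro conjI allI impI)
  let ?Z = "\<Sum>\<^sub>\<infinity>t. weight_ext t"
  show "0 \<le> weight_ext s / ?Z" for s
    using weight_total_pos weight_ext_nonneg[of s] by simp
  show "weight_ext s / ?Z = 0" if "\<not> valid_state K s" for s
    using that by (simp add: weight_ext_def)
  show "((\<lambda>s. weight_ext s / ?Z) has_sum 1) UNIV"
    using has_sum_divide_const[OF has_sum_infsum[OF weight_ext_summable], of ?Z] weight_total_pos by simp
  fix s assume v: "valid_state K s"
  have "weight_ext s / ?Z * exit_rate s = (\<Sum>\<^sub>\<infinity>t. weight_ext t * jump_rate t s) * inverse ?Z"
    using global_balance_weight[OF v] by (simp add: field_simps)
  also have "\<dots> = (\<Sum>\<^sub>\<infinity>t. weight_ext t / ?Z * jump_rate t s)"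
    by (subst infsum_cmult_left'[symmetric]) (simp add: field_simps)
  finally show "weight_ext s / ?Z * (\<Sum>\<^sub>\<infinity>s'\<in>UNIV - {s}. rate lam mu K s s')
      = (\<Sum>\<^sub>\<infinity>s'\<in>UNIV - {s}. weight_ext s' / ?Z * rate lam mu K s' s)"
    by (simp only: infsum_rate_out[OF v] infsum_rate_in)
qed

lemma stationary_unique:
  assumes "stationary lam mu K p"
  shows "p = (\<lambda>s. weight_ext s / (\<Sum>\<^sub>\<infinity>t. weight_ext t))"
proof -
  let ?Z = "\<Sum>\<^sub>\<infinity>t. weight_ext t"
  have p: "p = (\<lambda>s. p [] * weight_ext s)"
    using stationary_eq_weight[OF assms] by (rule ext)
  have "(p has_sum 1) UNIV"
    using assms by (simp add: stationary_def)
  moreover have "(p has_sum p [] * ?Z) UNIV"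
    by (subst p) (rule has_sum_cmult_right[OF has_sum_infsum[OF weight_ext_summable]])
  ultimately have "p [] = 1 / ?Z"
    using weight_total_pos has_sum_unique by (simp add: eq_divide_eq) blast
  then show ?thesis
    by (subst p) simp
qed

end

theorem mainTheorem8:
  fixes lam :: real and mu :: "nat \<Rightarrow> real" and K :: nat
  assumes "K \<ge> 1" and "lam > 0" and "\<And>l. l < K \<Longrightarrow> mu l > 0"
    and "lam < (\<Sum>l<K. mu l)"
  shows "(\<exists>!p. stationary lam mu K p) \<and>
         (\<forall>p. stationary lam mu K p \<longrightarrow>
              (\<forall>s. p s = (if valid_state K s then p [] * weight lam mu K s else 0)))"
proof -
  interpret hetero_queue lam mu K
    using assms by unfold_locales
  have "\<exists>!p. stationary lam mu K p"
    using stationary_normalized_weight stationary_unique by blast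
  moreover have "p s = (if valid_state K s then p [] * weight lam mu K s else 0)" if "stationary lam mu K p" for p s
    using stationary_eq_weight[OF that, of s] by (simp add: weight_ext_def)
  ultimately show ?thesis
    by blast
qed

end
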